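(* Let $M$ be a countable transitive model of $\mathrm{ZFU}_R$, $\mathbb{P}\in M$ a forcing poset, and $f\in M$ a function whose domain is an antichain of $\mathbb{P}$ and whose values lie in $M^{\mathbb{P}}$. Then there is $\dot v\in M^{\mathbb{P}}$ such that $p\Vdash\dot v=f(p)$ for every $p\in dom(f)$.
   Context: $\mathrm{ZFU}_R$ is ZF with urelements (language $\{\in,\mathcal{A}\}$, $\mathcal{A}$ the urelement predicate, Extensionality only for sets) formulated with Replacement rather than Collection, without AC. A $\mathbb{P}$-name is a set $\dot x$ of ordered pairs $\langle y,p\rangle$ with $p\in\mathbb{P}$ and $y$ either a $\mathbb{P}$-name or a urelement, such that whenever $\langle a,p\rangle,\langle y,q\rangle\in\dot x$ with $a$ a urelement and $a\neq y$, $p$ and $q$ are incompatible. $M^{\mathbb{P}}$ is the set of $\mathbb{P}$-names in $M$. For an $M$-generic filter $G$ and $\dot x\in M^{\mathbb{P}}$: $\dot x_G=a$ if $a$ is a urelement with $\langle a,p\rangle\in\dot x$ for some $p\in G$; otherwise $\dot x_G=\{\dot y_G:\langle\dot y,p\rangle\in\dot x,\ \dot y\in M^{\mathbb{P}},\ p\in G\}$. $M[G]=\{\dot x_G:\dot x\in M^{\mathbb{P}}\}$. $p\Vdash\varphi(\dot x_1,\dots,\dot x_n)$ means that for every $M$-generic $G$ with $p\in G$, $M[G]\models\varphi(\dot x_{1G},\dots,\dot x_{nG})$. *)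

theory Defs
  imports Main "HOL-Library.Countable_Set_Type" "HOL-Library.Countable_Set"
begin

text \<open>Every element of a countable transitive model is hereditarily countable, so
the ambient universe is taken to be the type of hereditarily countable,
well-founded, extensional sets over urelements of type 'u.\<close>

datatype 'u V = Ur 'u | Set "'u V cset"

definition mem :: "'u V \<Rightarrow> 'u V \<Rightarrow> bool" where
  "mem x y \<longleftrightarrow> (\<exists>S. y = Set S \<and> x \<in> rcset S)"

definition isUr :: "'u V \<Rightarrow> bool" where
  "isUr x \<longleftrightarrow> (\<exists>a. x = Ur a)"

definition upair :: "'u V \<Rightarrow> 'u V \<Rightarrow> 'u V" where
  "upair a b = Set (cinsert a (csingle b))"

definition opair :: "'u V \<Rightarrow> 'u V \<Rightarrow> 'u V" where
  "opair a b = upair (upair a a) (upair a b)"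

datatype fm = FMem nat nat | FEq nat nat | FUr nat | FNeg fm | FConj fm fm | FEx fm

definition econs :: "'u V \<Rightarrow> (nat \<Rightarrow> 'u V) \<Rightarrow> nat \<Rightarrow> 'u V" where
  "econs x env = case_nat x env"

primrec sat :: "'u V set \<Rightarrow> (nat \<Rightarrow> 'u V) \<Rightarrow> fm \<Rightarrow> bool" where
  "sat M env (FMem i j) = mem (env i) (env j)"
| "sat M env (FEq i j) = (env i = env j)"
| "sat M env (FUr i) = isUr (env i)"
| "sat M env (FNeg \<phi>) = (\<not> sat M env \<phi>)"
| "sat M env (FConj \<phi> \<psi>) = (sat M env \<phi> \<and> sat M env \<psi>)"
| "sat M env (FEx \<phi>) = (\<exists>x\<in>M. sat M (econs x env) \<phi>)"

definition ZFU_R_model :: "'u V set \<Rightarrow> bool" where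
  "ZFU_R_model M \<longleftrightarrow>
     \<comment> \<open>Urelements have no elements\<close>
     (\<forall>a\<in>M. isUr a \<longrightarrow> (\<forall>z\<in>M. \<not> mem z a))
   \<comment> \<open>Extensionality (for sets)\<close>
   \<and> (\<forall>x\<in>M. \<forall>y\<in>M. \<not> isUr x \<and> \<not> isUr y \<and> (\<forall>z\<in>M. mem z x \<longleftrightarrow> mem z y) \<longrightarrow> x = y)
   \<comment> \<open>Foundation\<close>
   \<and> (\<forall>x\<in>M. (\<exists>y\<in>M. mem y x) \<longrightarrow> (\<exists>y\<in>M. mem y x \<and> (\<forall>z\<in>M. mem z x \<longrightarrow> \<not> mem z y)))
   \<comment> \<open>Pairing\<close>
   \<and> (\<forall>x\<in>M. \<forall>y\<in>M. \<exists>z\<in>M. \<not> isUr z \<and> (\<forall>w\<in>M. mem w z \<longleftrightarrow> w = x \<or> w = y))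
   \<comment> \<open>Union\<close>
   \<and> (\<forall>x\<in>M. \<exists>y\<in>M. \<not> isUr y \<and> (\<forall>w\<in>M. mem w y \<longleftrightarrow> (\<exists>z\<in>M. mem z x \<and> mem w z)))
   \<comment> \<open>Powerset\<close>
   \<and> (\<forall>x\<in>M. \<exists>y\<in>M. \<not> isUr y \<and>
        (\<forall>z\<in>M. mem z y \<longleftrightarrow> (\<not> isUr z \<and> (\<forall>w\<in>M. mem w z \<longrightarrow> mem w x))))
   \<comment> \<open>Infinity\<close>
   \<and> (\<exists>y\<in>M. \<not> isUr y \<and>
        (\<exists>e\<in>M. mem e y \<and> \<not> isUr e \<and> (\<forall>z\<in>M. \<not> mem z e)) \<and>
        (\<forall>x\<in>M. mem x y \<longrightarrow> (\<exists>s\<in>M. mem s y \<and> \<not> isUr s \<and>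
                                  (\<forall>z\<in>M. mem z s \<longleftrightarrow> mem z x \<or> z = x))))
   \<comment> \<open>Separation scheme (with parameters env)\<close>
   \<and> (\<forall>\<phi> env. (\<forall>i. env i \<in> M) \<longrightarrow>
        (\<forall>x\<in>M. \<exists>y\<in>M. \<not> isUr y \<and>
           (\<forall>z\<in>M. mem z y \<longleftrightarrow> mem z x \<and> sat M (econs z env) \<phi>)))
   \<comment> \<open>Replacement scheme (with parameters env); u is variable 0, v is variable 1\<close>
   \<and> (\<forall>\<phi> env. (\<forall>i. env i \<in> M) \<longrightarrow>
        (\<forall>x\<in>M. (\<forall>u\<in>M. mem u x \<longrightarrow> (\<exists>!v. v \<in> M \<and> sat M (econs u (econs v env)) \<phi>)) \<longrightarrow>
           (\<exists>y\<in>M. \<not> isUr y \<and>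
              (\<forall>v\<in>M. mem v y \<longleftrightarrow> (\<exists>u\<in>M. mem u x \<and> sat M (econs u (econs v env)) \<phi>)))))"

definition transitive_cls :: "'u V set \<Rightarrow> bool" where
  "transitive_cls M \<longleftrightarrow> (\<forall>y\<in>M. \<forall>x. mem x y \<longrightarrow> x \<in> M)"

definition ctm :: "'u V set \<Rightarrow> bool" where
  "ctm M \<longleftrightarrow> countable M \<and> transitive_cls M \<and> ZFU_R_model M"

definition le :: "'u V \<Rightarrow> 'u V \<Rightarrow> 'u V \<Rightarrow> bool" where
  "le leq p q \<longleftrightarrow> mem (opair p q) leq"

definition forcing_poset :: "'u V \<Rightarrow> 'u V \<Rightarrow> 'u V \<Rightarrow> bool" where
  "forcing_poset P leq one \<longleftrightarrow>
     \<not> isUr P \<and> \<not> isUr leq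
   \<and> (\<forall>z. mem z leq \<longrightarrow> (\<exists>p q. z = opair p q \<and> mem p P \<and> mem q P))
   \<and> (\<forall>p. mem p P \<longrightarrow> le leq p p)
   \<and> (\<forall>p q r. mem p P \<and> mem q P \<and> mem r P \<and> le leq p q \<and> le leq q r \<longrightarrow> le leq p r)
   \<and> (\<forall>p q. mem p P \<and> mem q P \<and> le leq p q \<and> le leq q p \<longrightarrow> p = q)
   \<and> mem one P \<and> (\<forall>p. mem p P \<longrightarrow> le leq p one)"

definition compatible :: "'u V \<Rightarrow> 'u V \<Rightarrow> 'u V \<Rightarrow> 'u V \<Rightarrow> bool" where
  "compatible P leq p q \<longleftrightarrow> (\<exists>r. mem r P \<and> le leq r p \<and> le leq r q)"

definition antichain :: "'u V \<Rightarrow> 'u V \<Rightarrow> 'u V set \<Rightarrow> bool" where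
  "antichain P leq A \<longleftrightarrow> (\<forall>p\<in>A. mem p P) \<and>
     (\<forall>p\<in>A. \<forall>q\<in>A. p \<noteq> q \<longrightarrow> \<not> compatible P leq p q)"

definition dense :: "'u V \<Rightarrow> 'u V \<Rightarrow> 'u V \<Rightarrow> bool" where
  "dense P leq D \<longleftrightarrow> (\<forall>d. mem d D \<longrightarrow> mem d P) \<and>
     (\<forall>p. mem p P \<longrightarrow> (\<exists>d. mem d D \<and> le leq d p))"

definition filter_on :: "'u V \<Rightarrow> 'u V \<Rightarrow> 'u V set \<Rightarrow> bool" where
  "filter_on P leq G \<longleftrightarrow> G \<noteq> {} \<and> (\<forall>p\<in>G. mem p P)
   \<and> (\<forall>p\<in>G. \<forall>q. mem q P \<and> le leq p q \<longrightarrow> q \<in> G)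
   \<and> (\<forall>p\<in>G. \<forall>q\<in>G. \<exists>r\<in>G. le leq r p \<and> le leq r q)"

definition M_generic :: "'u V set \<Rightarrow> 'u V \<Rightarrow> 'u V \<Rightarrow> 'u V set \<Rightarrow> bool" where
  "M_generic M P leq G \<longleftrightarrow> filter_on P leq G \<and>
     (\<forall>D\<in>M. dense P leq D \<longrightarrow> (\<exists>d\<in>G. mem d D))"

inductive is_name :: "'u V \<Rightarrow> 'u V \<Rightarrow> 'u V \<Rightarrow> bool" for P leq where
  "\<lbrakk> \<not> isUr x;
     \<forall>z. mem z x \<longrightarrow> (\<exists>y p. z = opair y p \<and> mem p P \<and> (isUr y \<or> is_name P leq y));
     \<forall>a p y q. mem (opair a p) x \<and> mem (opair y q) x \<and> isUr a \<and> a \<noteq> y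
               \<longrightarrow> \<not> compatible P leq p q \<rbrakk>
   \<Longrightarrow> is_name P leq x"

definition names :: "'u V set \<Rightarrow> 'u V \<Rightarrow> 'u V \<Rightarrow> 'u V set" where
  "names M P leq = {x \<in> M. is_name P leq x}"

definition memrel :: "('u V \<times> 'u V) set" where
  "memrel = {(x, y). mem x y}"

definition val :: "'u V set \<Rightarrow> 'u V \<Rightarrow> 'u V \<Rightarrow> 'u V set \<Rightarrow> 'u V \<Rightarrow> 'u V" where
  "val M P leq G = wfrec (memrel\<^sup>+) (\<lambda>F x.
     if (\<exists>a p. isUr a \<and> p \<in> G \<and> mem (opair a p) x)
     then (THE a. isUr a \<and> (\<exists>p. p \<in> G \<and> mem (opair a p) x))
     else Set (acset {F y | y p. mem (opair y p) x \<and> y \<in> names M P leq \<and> p \<in> G}))"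

definition forces_eq :: "'u V set \<Rightarrow> 'u V \<Rightarrow> 'u V \<Rightarrow> 'u V \<Rightarrow> 'u V \<Rightarrow> 'u V \<Rightarrow> bool" where
  "forces_eq M P leq p x y \<longleftrightarrow>
     (\<forall>G. M_generic M P leq G \<and> p \<in> G \<longrightarrow> val M P leq G x = val M P leq G y)"

definition is_function :: "'u V \<Rightarrow> bool" where
  "is_function f \<longleftrightarrow> \<not> isUr f \<and> (\<forall>z. mem z f \<longrightarrow> (\<exists>a b. z = opair a b))
     \<and> (\<forall>a b c. mem (opair a b) f \<and> mem (opair a c) f \<longrightarrow> b = c)"

definition dom :: "'u V \<Rightarrow> 'u V set" where
  "dom f = {a. \<exists>b. mem (opair a b) f}"

definition app :: "'u V \<Rightarrow> 'u V \<Rightarrow> 'u V" where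
  "app f a = (THE b. mem (opair a b) f)"

end

theory Submission
  imports Defs
begin

(* The name v = {(y, r) | p \<in> dom f, (y, q) \<in> f(p), r \<le> p, r \<le> q} mixes the names f(p).
   If p \<in> G, every label r \<in> G of a pair in v lies below some p' \<in> dom f, and p' = p since
   G is a filter and dom f an antichain; hence v and f(p) have the same G-labelled components
   and the same value. The same antichain argument gives the urelement clause of the definition
   of names for v, and v lies in M by Separation from a superset of (Union^5 f) \<times> P, which
   Union and Power set provide. *)

lemma mem_Set [simp]: "mem x (Set S) \<longleftrightarrow> x \<in> rcset S"
  by (simp add: mem_def)

lemma not_mem_Ur [simp]: "\<not> mem x (Ur a)"
  by (simp add: mem_def)

lemma isUr_simps [simp]: "isUr (Ur a)" "\<not> isUr (Set S)"
  by (auto simp: isUr_def)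

lemma V_extensionality:
  assumes "\<not> isUr x" "\<not> isUr y" "\<And>z. mem z x \<longleftrightarrow> mem z y"
  shows "x = y"
  using assms by (cases x; cases y) (auto simp: rcset_inject[symmetric])

lemma mem_upair [simp]: "mem x (upair a b) \<longleftrightarrow> x = a \<or> x = b"
  by (simp add: upair_def cinsert.rep_eq bot_cset.rep_eq)

lemma not_isUr_upair [simp]: "\<not> isUr (upair a b)"
  by (simp add: upair_def)

lemma upair_eq_iff: "upair a b = upair c d \<longleftrightarrow> (a = c \<and> b = d) \<or> (a = d \<and> b = c)"
proof -
  have "upair a b = upair c d \<longleftrightarrow> (\<forall>x. mem x (upair a b) \<longleftrightarrow> mem x (upair c d))"
    using V_extensionality[of "upair a b" "upair c d"] by (auto simp del: mem_upair)
  also have "\<dots> \<longleftrightarrow> {a, b} = {c, d}"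
    by (simp add: set_eq_iff)
  also have "\<dots> \<longleftrightarrow> (a = c \<and> b = d) \<or> (a = d \<and> b = c)"
    by (rule doubleton_eq_iff)
  finally show ?thesis .
qed

lemma opair_eq_iff [simp]: "opair a b = opair c d \<longleftrightarrow> a = c \<and> b = d"
  unfolding opair_def upair_eq_iff by auto

lemma wf_memrel: "wf memrel"
proof (rule wfUNIVI)
  fix Q :: "'a V \<Rightarrow> bool" and x
  assume "\<forall>x. (\<forall>y. (y, x) \<in> memrel \<longrightarrow> Q y) \<longrightarrow> Q x"
  then show "Q x"
    by (induct x) (auto simp: memrel_def)
qed

lemma opair_fst_memrel_trancl: "mem (opair y p) x \<Longrightarrow> (y, x) \<in> memrel\<^sup>+"
  unfolding memrel_def opair_def
  by (rule trancl_into_trancl[OF trancl_into_trancl[OF r_into_trancl]]) auto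

lemma val_unfold:
  "val M P leq G x =
     (if \<exists>a. isUr a \<and> (\<exists>p\<in>G. mem (opair a p) x)
      then THE a. isUr a \<and> (\<exists>p\<in>G. mem (opair a p) x)
      else Set (acset {val M P leq G y | y. y \<in> names M P leq \<and> (\<exists>p\<in>G. mem (opair y p) x)}))"
proof -
  have "cut (val M P leq G) (memrel\<^sup>+) x y = val M P leq G y" if "mem (opair y p) x" for y p
    using that by (simp add: cut_apply opair_fst_memrel_trancl)
  then have "{cut (val M P leq G) (memrel\<^sup>+) x y | y p. mem (opair y p) x \<and> y \<in> names M P leq \<and> p \<in> G}
      = {val M P leq G y | y. y \<in> names M P leq \<and> (\<exists>p\<in>G. mem (opair y p) x)}"
    by fastforce
  then show ?thesis
    by (subst def_wfrec[OF val_def[THEN eq_reflection] wf_trancl[OF wf_memrel]])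
      (simp add: Bex_def conj_commute, blast)
qed

lemma val_cong:
  assumes "\<And>y. (\<exists>p\<in>G. mem (opair y p) v) \<longleftrightarrow> (\<exists>p\<in>G. mem (opair y p) w)"
  shows "val M P leq G v = val M P leq G w"
  by (subst (1 2) val_unfold) (simp only: assms)

lemma transitive_clsD: "transitive_cls M \<Longrightarrow> y \<in> M \<Longrightarrow> mem x y \<Longrightarrow> x \<in> M"
  by (auto simp: transitive_cls_def)

lemma transitive_cls_opair_memD:
  assumes "transitive_cls M" "c \<in> M" "mem (opair a b) c"
  shows "a \<in> M" "b \<in> M"
proof -
  have "opair a b \<in> M"
    using transitive_clsD[OF assms] .
  then have "upair a b \<in> M"
    using transitive_clsD[OF assms(1)] by (simp add: opair_def)
  then show "a \<in> M" "b \<in> M"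
    using transitive_clsD[OF assms(1)] by simp_all
qed

lemma eq_upair_iff_relativized:
  assumes "transitive_cls M" "x \<in> M" "a \<in> M" "b \<in> M"
  shows "\<not> isUr x \<and> (\<forall>w\<in>M. mem w x \<longleftrightarrow> w = a \<or> w = b) \<longleftrightarrow> x = upair a b"
proof -
  have "(\<forall>w\<in>M. mem w x \<longleftrightarrow> w = a \<or> w = b) \<longleftrightarrow> (\<forall>w. mem w x \<longleftrightarrow> w = a \<or> w = b)"
    using assms transitive_clsD by blast
  then show ?thesis
    using V_extensionality[of x "upair a b"] by auto
qed

definition FImp :: "fm \<Rightarrow> fm \<Rightarrow> fm" where "FImp \<phi> \<psi> = FNeg (FConj \<phi> (FNeg \<psi>))"
definition FOr :: "fm \<Rightarrow> fm \<Rightarrow> fm" where "FOr \<phi> \<psi> = FNeg (FConj (FNeg \<phi>) (FNeg \<psi>))"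
definition FIff :: "fm \<Rightarrow> fm \<Rightarrow> fm" where "FIff \<phi> \<psi> = FConj (FImp \<phi> \<psi>) (FImp \<psi> \<phi>)"
definition FAll :: "fm \<Rightarrow> fm" where "FAll \<phi> = FNeg (FEx (FNeg \<phi>))"

lemma sat_derived [simp]:
  "sat M env (FImp \<phi> \<psi>) \<longleftrightarrow> (sat M env \<phi> \<longrightarrow> sat M env \<psi>)"
  "sat M env (FOr \<phi> \<psi>) \<longleftrightarrow> sat M env \<phi> \<or> sat M env \<psi>"
  "sat M env (FIff \<phi> \<psi>) \<longleftrightarrow> (sat M env \<phi> \<longleftrightarrow> sat M env \<psi>)"
  "sat M env (FAll \<phi>) \<longleftrightarrow> (\<forall>x\<in>M. sat M (econs x env) \<phi>)"
  by (auto simp: FImp_def FOr_def FIff_def FAll_def)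

lemma econs_simps [simp]:
  "econs x env 0 = x" "econs x env (Suc n) = env n" "econs x env (numeral k) = env (pred_numeral k)"
  by (simp_all add: econs_def)

definition fupair :: "nat \<Rightarrow> nat \<Rightarrow> nat \<Rightarrow> fm" where
  "fupair i j k = FConj (FNeg (FUr i)) (FAll (FIff (FMem 0 (Suc i)) (FOr (FEq 0 (Suc j)) (FEq 0 (Suc k)))))"

definition fopair :: "nat \<Rightarrow> nat \<Rightarrow> nat \<Rightarrow> fm" where
  "fopair i j k = FEx (FEx (FConj (fupair 1 (Suc (Suc j)) (Suc (Suc j)))
     (FConj (fupair 0 (Suc (Suc j)) (Suc (Suc k))) (fupair (Suc (Suc i)) 1 0))))"

definition fmem_opair :: "nat \<Rightarrow> nat \<Rightarrow> nat \<Rightarrow> fm" where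
  "fmem_opair i j k = FEx (FConj (fopair 0 (Suc i) (Suc j)) (FMem 0 (Suc k)))"

lemma sat_fupair [simp]:
  assumes "transitive_cls M" "env i \<in> M" "env j \<in> M" "env k \<in> M"
  shows "sat M env (fupair i j k) \<longleftrightarrow> env i = upair (env j) (env k)"
  using assms by (simp add: fupair_def eq_upair_iff_relativized)

lemma sat_fopair [simp]:
  assumes "transitive_cls M" "env i \<in> M" "env j \<in> M" "env k \<in> M"
  shows "sat M env (fopair i j k) \<longleftrightarrow> env i = opair (env j) (env k)"
  unfolding fopair_def opair_def using assms transitive_clsD[OF assms(1,2)] by auto

lemma sat_fmem_opair [simp]:
  assumes "transitive_cls M" "env i \<in> M" "env j \<in> M" "env k \<in> M"
  shows "sat M env (fmem_opair i j k) \<longleftrightarrow> mem (opair (env i) (env j)) (env k)"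
  unfolding fmem_opair_def using assms transitive_clsD[OF assms(1,4)] by auto

lemma ctm_transitive_cls: "ctm M \<Longrightarrow> transitive_cls M"
  by (simp add: ctm_def)

lemma ctm_upair_mem:
  assumes "ctm M" "a \<in> M" "b \<in> M"
  shows "upair a b \<in> M"
proof -
  have "\<forall>x\<in>M. \<forall>y\<in>M. \<exists>z\<in>M. \<not> isUr z \<and> (\<forall>w\<in>M. mem w z \<longleftrightarrow> w = x \<or> w = y)"
    using assms(1) unfolding ctm_def ZFU_R_model_def by (elim conjE) assumption
  then show ?thesis
    using assms eq_upair_iff_relativized[OF ctm_transitive_cls[OF assms(1)]] by blast
qed

lemma ctm_opair_mem: "ctm M \<Longrightarrow> a \<in> M \<Longrightarrow> b \<in> M \<Longrightarrow> opair a b \<in> M"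
  by (simp add: opair_def ctm_upair_mem)

lemma ctm_Union:
  assumes "ctm M" "x \<in> M"
  obtains y where "y \<in> M" "\<And>w. mem w y \<longleftrightarrow> (\<exists>z. mem z x \<and> mem w z)"
proof -
  note trans = transitive_clsD[OF ctm_transitive_cls[OF assms(1)]]
  have "\<forall>x\<in>M. \<exists>y\<in>M. \<not> isUr y \<and> (\<forall>w\<in>M. mem w y \<longleftrightarrow> (\<exists>z\<in>M. mem z x \<and> mem w z))"
    using assms(1) unfolding ctm_def ZFU_R_model_def by (elim conjE) assumption
  then obtain y where y: "y \<in> M" "\<forall>w\<in>M. mem w y \<longleftrightarrow> (\<exists>z\<in>M. mem z x \<and> mem w z)"
    using assms(2) by blast
  have "mem w y \<longleftrightarrow> (\<exists>z. mem z x \<and> mem w z)" for w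
    using y trans[OF y(1), of w] trans[OF assms(2)] trans by blast
  with y(1) show ?thesis
    by (rule that)
qed

lemma ctm_Pow:
  assumes "ctm M" "x \<in> M"
  obtains y where "y \<in> M" "\<And>z. z \<in> M \<Longrightarrow> mem z y \<longleftrightarrow> \<not> isUr z \<and> (\<forall>w. mem w z \<longrightarrow> mem w x)"
proof -
  note trans = transitive_clsD[OF ctm_transitive_cls[OF assms(1)]]
  have "\<forall>x\<in>M. \<exists>y\<in>M. \<not> isUr y \<and> (\<forall>z\<in>M. mem z y \<longleftrightarrow> \<not> isUr z \<and> (\<forall>w\<in>M. mem w z \<longrightarrow> mem w x))"
    using assms(1) unfolding ctm_def ZFU_R_model_def by (elim conjE) assumption
  then obtain y where y: "y \<in> M" "\<forall>z\<in>M. mem z y \<longleftrightarrow> \<not> isUr z \<and> (\<forall>w\<in>M. mem w z \<longrightarrow> mem w x)"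
    using assms(2) by blast
  have "mem z y \<longleftrightarrow> \<not> isUr z \<and> (\<forall>w. mem w z \<longrightarrow> mem w x)" if "z \<in> M" for z
    using y(2) trans[OF that] that by blast
  with y(1) show ?thesis
    by (rule that)
qed

lemma ctm_Separation:
  assumes "ctm M" "\<And>i. env i \<in> M" "x \<in> M"
  obtains y where "y \<in> M" "\<not> isUr y" "\<And>z. mem z y \<longleftrightarrow> mem z x \<and> sat M (econs z env) \<phi>"
proof -
  note trans = transitive_clsD[OF ctm_transitive_cls[OF assms(1)]]
  have "\<forall>\<phi> env. (\<forall>i. env i \<in> M) \<longrightarrow> (\<forall>x\<in>M. \<exists>y\<in>M. \<not> isUr y \<and>
      (\<forall>z\<in>M. mem z y \<longleftrightarrow> mem z x \<and> sat M (econs z env) \<phi>))"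
    using assms(1) unfolding ctm_def ZFU_R_model_def by (elim conjE) assumption
  then obtain y where y: "y \<in> M" "\<not> isUr y" "\<forall>z\<in>M. mem z y \<longleftrightarrow> mem z x \<and> sat M (econs z env) \<phi>"
    using assms(2,3) by blast
  have "mem z y \<longleftrightarrow> mem z x \<and> sat M (econs z env) \<phi>" for z
    using y(3) trans[OF y(1), of z] trans[OF assms(3), of z] by blast
  with y(1,2) show ?thesis
    by (rule that)
qed

lemma ctm_opair_components_superset:
  assumes "ctm M" "x \<in> M"
  obtains u where "u \<in> M" "\<And>a b. mem (opair a b) x \<Longrightarrow> mem a u \<and> mem b u"
proof -
  obtain u1 where u1: "u1 \<in> M" "\<And>w. mem w u1 \<longleftrightarrow> (\<exists>z. mem z x \<and> mem w z)"
    using ctm_Union[OF assms] by blast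
  obtain u where u: "u \<in> M" "\<And>w. mem w u \<longleftrightarrow> (\<exists>z. mem z u1 \<and> mem w z)"
    using ctm_Union[OF assms(1) u1(1)] by blast
  have "mem a u \<and> mem b u" if "mem (opair a b) x" for a b
  proof -
    have "mem (upair a b) u1"
      using u1(2) that by (auto simp: opair_def)
    then show ?thesis
      using u(2) by auto
  qed
  with u(1) show ?thesis
    by (rule that)
qed

lemma ctm_product_superset:
  assumes "ctm M" "A \<in> M" "B \<in> M"
  obtains X where "X \<in> M" "\<And>a b. mem a A \<Longrightarrow> mem b B \<Longrightarrow> mem (opair a b) X"
proof -
  note trans = transitive_clsD[OF ctm_transitive_cls[OF assms(1)]]
  obtain W where W: "W \<in> M" "\<And>w. mem w W \<longleftrightarrow> (\<exists>z. mem z (upair A B) \<and> mem w z)"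
    using ctm_Union[OF assms(1) ctm_upair_mem[OF assms]] by blast
  obtain PW where PW: "PW \<in> M" "\<And>z. z \<in> M \<Longrightarrow> mem z PW \<longleftrightarrow> \<not> isUr z \<and> (\<forall>w. mem w z \<longrightarrow> mem w W)"
    using ctm_Pow[OF assms(1) W(1)] by blast
  obtain X where X: "X \<in> M" "\<And>z. z \<in> M \<Longrightarrow> mem z X \<longleftrightarrow> \<not> isUr z \<and> (\<forall>w. mem w z \<longrightarrow> mem w PW)"
    using ctm_Pow[OF assms(1) PW(1)] by blast
  have "mem (opair a b) X" if "mem a A" "mem b B" for a b
  proof -
    have "a \<in> M" "b \<in> M"
      using trans assms(2,3) that by blast+
    then have "upair a a \<in> M" "upair a b \<in> M" "opair a b \<in> M"
      using assms(1) by (simp_all add: ctm_upair_mem ctm_opair_mem)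
    moreover have "mem (upair a a) PW" "mem (upair a b) PW"
      using PW(2) W(2) calculation that by auto
    ultimately show ?thesis
      using X(2) by (auto simp: opair_def)
  qed
  with X(1) show ?thesis
    by (rule that)
qed

lemma app_eqI: "is_function f \<Longrightarrow> mem (opair p b) f \<Longrightarrow> app f p = b"
  unfolding app_def by (rule the_equality) (auto simp: is_function_def)

lemma mem_opair_function_iff:
  "is_function f \<Longrightarrow> mem (opair p b) f \<longleftrightarrow> p \<in> dom f \<and> b = app f p"
  by (auto simp: dom_def app_eqI)

lemma is_name_mem_opairD:
  assumes "is_name P leq x" "mem (opair y q) x"
  shows "mem q P" "isUr y \<or> is_name P leq y"
proof -
  have "\<exists>y' p. opair y q = opair y' p \<and> mem p P \<and> (isUr y' \<or> is_name P leq y')"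
    using assms by (cases rule: is_name.cases) blast
  then show "mem q P" "isUr y \<or> is_name P leq y"
    by auto
qed

lemma is_name_urelement_incompatible:
  assumes "is_name P leq x" "mem (opair a p) x" "mem (opair y q) x" "isUr a" "a \<noteq> y"
  shows "\<not> compatible P leq p q"
  using assms by (auto elim!: is_name.cases)

lemma compatibleI: "mem r P \<Longrightarrow> le leq r p \<Longrightarrow> le leq r q \<Longrightarrow> compatible P leq p q"
  by (auto simp: compatible_def)

lemma forcing_poset_le_trans:
  "forcing_poset P leq one \<Longrightarrow> mem p P \<Longrightarrow> mem q P \<Longrightarrow> mem r P \<Longrightarrow> le leq p q \<Longrightarrow> le leq q r
    \<Longrightarrow> le leq p r"
  unfolding forcing_poset_def by blast

lemma antichain_eq_if_compatible:
  "antichain P leq A \<Longrightarrow> p \<in> A \<Longrightarrow> q \<in> A \<Longrightarrow> compatible P leq p q \<Longrightarrow> p = q"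
  unfolding antichain_def by blast

lemma antichain_memD: "antichain P leq A \<Longrightarrow> p \<in> A \<Longrightarrow> mem p P"
  unfolding antichain_def by blast

lemma filter_on_compatible:
  assumes "filter_on P leq G" "p \<in> G" "q \<in> G"
  shows "compatible P leq p q"
  using assms unfolding filter_on_def compatible_def by blast

definition is_mixture :: "'u V \<Rightarrow> 'u V \<Rightarrow> 'u V \<Rightarrow> 'u V \<Rightarrow> bool" where
  "is_mixture P leq f v \<longleftrightarrow> \<not> isUr v \<and> (\<forall>z. mem z v \<longleftrightarrow>
     (\<exists>p\<in>dom f. \<exists>y q r. z = opair y r \<and> mem (opair y q) (app f p) \<and> mem r P
        \<and> le leq r p \<and> le leq r q))"

lemma is_mixture_memD:
  assumes "is_mixture P leq f v" "mem (opair y r) v"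
  obtains p q where "p \<in> dom f" "mem (opair y q) (app f p)" "mem r P" "le leq r p" "le leq r q"
  using assms unfolding is_mixture_def by auto

(* With environment z, f, P, leq, the bound variables p, b, y, q, r have de Bruijn indices 4 to 0;
   the formula says z = (y, r), (p, b) \<in> f, (y, q) \<in> b, r \<in> P, r \<le> p and r \<le> q. *)
definition fmixture_pair :: fm where
  "fmixture_pair = FEx (FEx (FEx (FEx (FEx
     (FConj (fopair 5 2 0) (FConj (fmem_opair 4 3 6) (FConj (fmem_opair 2 1 3)
     (FConj (FMem 0 7) (FConj (fmem_opair 0 4 8) (fmem_opair 0 1 8))))))))))"

lemma sat_fmixture_pair:
  assumes "transitive_cls M" "z \<in> M" "f \<in> M" "P \<in> M" "leq \<in> M"
  shows "sat M (econs z (econs f (econs P (\<lambda>_. leq)))) fmixture_pair \<longleftrightarrow>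
    (\<exists>p b y q r. z = opair y r \<and> mem (opair p b) f \<and> mem (opair y q) b \<and> mem r P
       \<and> le leq r p \<and> le leq r q)"
proof -
  have "sat M (econs z (econs f (econs P (\<lambda>_. leq)))) fmixture_pair \<longleftrightarrow>
    (\<exists>p\<in>M. \<exists>b\<in>M. \<exists>y\<in>M. \<exists>q\<in>M. \<exists>r\<in>M. z = opair y r \<and> mem (opair p b) f \<and> mem (opair y q) b
       \<and> mem r P \<and> mem (opair r p) leq \<and> mem (opair r q) leq)"
    using assms by (simp add: fmixture_pair_def cong: bex_cong conj_cong)
  also have "\<dots> \<longleftrightarrow> (\<exists>p b y q r. z = opair y r \<and> mem (opair p b) f \<and> mem (opair y q) b \<and> mem r P
       \<and> le leq r p \<and> le leq r q)" (is "?relativized \<longleftrightarrow> ?absolute")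
  proof
    assume ?relativized
    then show ?absolute
      unfolding le_def by blast
  next
    assume ?absolute
    then obtain p b y q r where h: "z = opair y r" "mem (opair p b) f" "mem (opair y q) b" "mem r P"
      "le leq r p" "le leq r q"
      by blast
    have "p \<in> M" "b \<in> M"
      using transitive_cls_opair_memD[OF assms(1,3) h(2)] by simp_all
    moreover have "y \<in> M" "q \<in> M"
      using transitive_cls_opair_memD[OF assms(1) \<open>b \<in> M\<close> h(3)] by simp_all
    moreover have "r \<in> M"
      using transitive_clsD[OF assms(1,4) h(4)] .
    ultimately show ?relativized
      using h unfolding le_def by blast
  qed
  finally show ?thesis .
qed

lemma ctm_ex_mixture:
  assumes "ctm M" "P \<in> M" "leq \<in> M" "f \<in> M" "is_function f"
  obtains v where "v \<in> M" "is_mixture P leq f v"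
proof -
  have trans: "transitive_cls M"
    using assms(1) by (rule ctm_transitive_cls)
  obtain u where u: "u \<in> M" "\<And>a b. mem (opair a b) f \<Longrightarrow> mem a u \<and> mem b u"
    using ctm_opair_components_superset[OF assms(1,4)] by blast
  obtain u' where u': "u' \<in> M" "\<And>w. mem w u' \<longleftrightarrow> (\<exists>z. mem z u \<and> mem w z)"
    using ctm_Union[OF assms(1) u(1)] by blast
  obtain U where U: "U \<in> M" "\<And>a b. mem (opair a b) u' \<Longrightarrow> mem a U \<and> mem b U"
    using ctm_opair_components_superset[OF assms(1) u'(1)] by blast
  obtain X where X: "X \<in> M" "\<And>a b. mem a U \<Longrightarrow> mem b P \<Longrightarrow> mem (opair a b) X"
    using ctm_product_superset[OF assms(1) U(1) assms(2)] by blast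
  define env where "env = econs f (econs P (\<lambda>_. leq))"
  have env: "env i \<in> M" for i
    using assms(2-4) by (simp add: env_def econs_def split: nat.split)
  obtain v where v: "v \<in> M" "\<not> isUr v" "\<And>z. mem z v \<longleftrightarrow> mem z X \<and> sat M (econs z env) fmixture_pair"
    using ctm_Separation[where env = env and \<phi> = fmixture_pair, OF assms(1) env X(1)] by blast
  let ?pair = "\<lambda>z. \<exists>p b y q r. z = opair y r \<and> mem (opair p b) f \<and> mem (opair y q) b \<and> mem r P
       \<and> le leq r p \<and> le leq r q"
  have in_X: "mem z X" if "?pair z" for z
  proof -
    from that obtain p b y q r where h: "z = opair y r" "mem (opair p b) f" "mem (opair y q) b" "mem r P"
      by blast
    have "mem (opair y q) u'"
      using u'(2) u(2)[OF h(2)] h(3) by blast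
    then show ?thesis
      using X(2)[OF _ h(4)] U(2) h(1) by blast
  qed
  have "mem z v \<longleftrightarrow> ?pair z" for z
  proof -
    have "mem z X \<and> sat M (econs z env) fmixture_pair \<longleftrightarrow> mem z X \<and> ?pair z"
      using sat_fmixture_pair[OF trans _ assms(4,2,3), of z] transitive_clsD[OF trans X(1), of z]
      unfolding env_def by blast
    then show ?thesis
      using v(3) in_X by blast
  qed
  then have "is_mixture P leq f v"
    using v(2) unfolding is_mixture_def mem_opair_function_iff[OF assms(5)] by blast
  with v(1) show ?thesis
    by (rule that)
qed

lemma is_name_mixture:
  assumes "forcing_poset P leq one" "antichain P leq (dom f)"
    and names: "\<And>p. p \<in> dom f \<Longrightarrow> is_name P leq (app f p)"
    and mix: "is_mixture P leq f v"
  shows "is_name P leq v"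
proof (rule is_name.intros)
  show "\<not> isUr v"
    using mix by (simp add: is_mixture_def)
  show "\<forall>z. mem z v \<longrightarrow> (\<exists>y r. z = opair y r \<and> mem r P \<and> (isUr y \<or> is_name P leq y))"
    using mix names is_name_mem_opairD(2) unfolding is_mixture_def by blast
  show "\<forall>a r y r'. mem (opair a r) v \<and> mem (opair y r') v \<and> isUr a \<and> a \<noteq> y
      \<longrightarrow> \<not> compatible P leq r r'"
  proof (intro allI impI notI)
    fix a r y r'
    assume h: "mem (opair a r) v \<and> mem (opair y r') v \<and> isUr a \<and> a \<noteq> y"
      and "compatible P leq r r'"
    then obtain s where s: "mem s P" "le leq s r" "le leq s r'"
      by (auto simp: compatible_def)
    obtain p q where pq: "p \<in> dom f" "mem (opair a q) (app f p)" "mem r P" "le leq r p" "le leq r q"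
      using is_mixture_memD[OF mix] h by blast
    obtain p' q' where pq': "p' \<in> dom f" "mem (opair y q') (app f p')" "mem r' P" "le leq r' p'" "le leq r' q'"
      using is_mixture_memD[OF mix] h by blast
    note le_trans = forcing_poset_le_trans[OF assms(1)]
    have "mem p P" "mem p' P" "mem q P" "mem q' P"
      using antichain_memD[OF assms(2)] pq(1,2) pq'(1,2) is_name_mem_opairD(1) names by blast+
    then have "le leq s p" "le leq s p'" "le leq s q" "le leq s q'"
      using le_trans s pq pq' by blast+
    then have "compatible P leq p p'" "compatible P leq q q'"
      using compatibleI[OF s(1)] by blast+
    then have "p = p'" "compatible P leq q q'"
      using antichain_eq_if_compatible[OF assms(2) pq(1) pq'(1)] by blast+
    moreover have "\<not> compatible P leq q q'"
      using is_name_urelement_incompatible[OF names[OF pq(1)] pq(2)] pq'(2) h \<open>p = p'\<close> by blast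
    ultimately show False
      by blast
  qed
qed

lemma val_mixture:
  assumes G: "filter_on P leq G" and "antichain P leq (dom f)"
    and names: "\<And>p. p \<in> dom f \<Longrightarrow> is_name P leq (app f p)"
    and mix: "is_mixture P leq f v" and p: "p \<in> dom f" "p \<in> G"
  shows "val M P leq G v = val M P leq G (app f p)"
proof (rule val_cong)
  have G_up: "q \<in> G" if "r \<in> G" "mem q P" "le leq r q" for r q
    using G that unfolding filter_on_def by blast
  fix y
  show "(\<exists>r\<in>G. mem (opair y r) v) \<longleftrightarrow> (\<exists>q\<in>G. mem (opair y q) (app f p))"
  proof
    assume "\<exists>r\<in>G. mem (opair y r) v"
    then obtain r p' q where r: "r \<in> G" and pq: "p' \<in> dom f" "mem (opair y q) (app f p')"
      "le leq r p'" "le leq r q"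
      using is_mixture_memD[OF mix] by metis
    have "p' \<in> G" "q \<in> G"
      using G_up[OF r] antichain_memD[OF assms(2) pq(1)] is_name_mem_opairD(1)[OF names[OF pq(1)] pq(2)]
        pq(3,4)
      by blast+
    then have "p = p'"
      using antichain_eq_if_compatible[OF assms(2) p(1) pq(1)] filter_on_compatible[OF G p(2)] by blast
    with pq(2) \<open>q \<in> G\<close> show "\<exists>q\<in>G. mem (opair y q) (app f p)"
      by blast
  next
    assume "\<exists>q\<in>G. mem (opair y q) (app f p)"
    then obtain q where q: "q \<in> G" "mem (opair y q) (app f p)"
      by blast
    obtain s where s: "s \<in> G" "le leq s p" "le leq s q"
      using G p(2) q(1) unfolding filter_on_def by blast
    have "mem s P"
      using G s(1) unfolding filter_on_def by blast
    then have "mem (opair y s) v"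
      using mix p(1) q(2) s(2,3) unfolding is_mixture_def by blast
    with s(1) show "\<exists>r\<in>G. mem (opair y r) v"
      by blast
  qed
qed

theorem mainTheorem13:
  fixes M :: "'u V set" and P leq one f :: "'u V"
  assumes "ctm M"
    and "P \<in> M" and "leq \<in> M" and "one \<in> M" and "forcing_poset P leq one"
    and "f \<in> M" and "is_function f"
    and "antichain P leq (dom f)"
    and "\<forall>p\<in>dom f. app f p \<in> names M P leq"
  shows "\<exists>v\<in>names M P leq. \<forall>p\<in>dom f. forces_eq M P leq p v (app f p)"
proof -
  have names: "\<And>p. p \<in> dom f \<Longrightarrow> is_name P leq (app f p)"
    using assms(9) by (simp add: names_def)
  obtain v where v: "v \<in> M" "is_mixture P leq f v"
    using ctm_ex_mixture[OF assms(1-3,6,7)] by blast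
  have "v \<in> names M P leq"
    using v is_name_mixture[OF assms(5,8) names] by (simp add: names_def)
  moreover have "forces_eq M P leq p v (app f p)" if "p \<in> dom f" for p
    unfolding forces_eq_def M_generic_def
    using val_mixture[OF _ assms(8) names v(2) that] by blast
  ultimately show ?thesis
    by blast
qed

end
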